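(* Let $L=L_1\times L_2$ where $L_1$ and $L_2$ are $C$-lattices, and let $n\ge1$. (1) $q_1$ is a quasi $n$-absorbing element of $L_1$ if and only if $(q_1,1_{L_2})$ is a quasi $n$-absorbing element of $L$. (2) $q_2$ is a quasi $n$-absorbing element of $L_2$ if and only if $(1_{L_1},q_2)$ is a quasi $n$-absorbing element of $L$.
   Context: A multiplicative lattice is a complete lattice with least element $0$ and compact greatest element $1$, equipped with a commutative, associative product that distributes over arbitrary joins and has $1$ as multiplicative identity. An element $a$ is compact if $a\le\bigvee_{\alpha\in I}a_\alpha$ implies $a\le\bigvee_{\alpha\in I_0}a_\alpha$ for some finite $I_0\subseteq I$. A $C$-lattice is a multiplicative lattice generated under joins by a multiplicatively closed set of compact elements. $L_1\times L_2$ carries the componentwise order and product. $a^0=1$. A proper element $q$ ($q<1$) of a multiplicative lattice $M$ is quasi $n$-absorbing if whenever $a^nb\le q$ for some compact $a,b\in M$, then $a^n\le q$ or $a^{n-1}b\le q$. *)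

theory Defs
  imports Main "HOL-Library.Product_Order"
begin

definition compact_el :: "'a::complete_lattice \<Rightarrow> bool" where
  "compact_el a \<longleftrightarrow> (\<forall>S. a \<le> Sup S \<longrightarrow> (\<exists>F. F \<subseteq> S \<and> finite F \<and> a \<le> Sup F))"

definition mult_lattice :: "('a::complete_lattice \<Rightarrow> 'a \<Rightarrow> 'a) \<Rightarrow> bool" where
  "mult_lattice m \<longleftrightarrow>
     compact_el (top::'a) \<and>
     (\<forall>a b. m a b = m b a) \<and>
     (\<forall>a b c. m (m a b) c = m a (m b c)) \<and>
     (\<forall>a S. m a (Sup S) = Sup ((m a) ` S)) \<and>
     (\<forall>a. m top a = a)"

definition C_lattice :: "('a::complete_lattice \<Rightarrow> 'a \<Rightarrow> 'a) \<Rightarrow> bool" where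
  "C_lattice m \<longleftrightarrow> mult_lattice m \<and>
     (\<exists>C. (\<forall>c\<in>C. compact_el c) \<and> top \<in> C \<and> (\<forall>a\<in>C. \<forall>b\<in>C. m a b \<in> C) \<and>
          (\<forall>x. \<exists>S. S \<subseteq> C \<and> x = Sup S))"

primrec mpow :: "('a::complete_lattice \<Rightarrow> 'a \<Rightarrow> 'a) \<Rightarrow> 'a \<Rightarrow> nat \<Rightarrow> 'a" where
  "mpow m a 0 = top"
| "mpow m a (Suc k) = m a (mpow m a k)"

definition quasi_n_absorbing ::
  "('a::complete_lattice \<Rightarrow> 'a \<Rightarrow> 'a) \<Rightarrow> nat \<Rightarrow> 'a \<Rightarrow> bool" where
  "quasi_n_absorbing m n q \<longleftrightarrow> q < top \<and>
     (\<forall>a b. compact_el a \<longrightarrow> compact_el b \<longrightarrow> m (mpow m a n) b \<le> q \<longrightarrow>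
        mpow m a n \<le> q \<or> m (mpow m a (n - 1)) b \<le> q)"

definition prod_mult ::
  "('a \<Rightarrow> 'a \<Rightarrow> 'a) \<Rightarrow> ('b \<Rightarrow> 'b \<Rightarrow> 'b) \<Rightarrow> 'a \<times> 'b \<Rightarrow> 'a \<times> 'b \<Rightarrow> 'a \<times> 'b" where
  "prod_mult m1 m2 x y = (m1 (fst x) (fst y), m2 (snd x) (snd y))"

end

theory Submission
  imports Defs
begin

text \<open>Compact elements of \<open>L\<^sub>1 \<times> L\<^sub>2\<close> are exactly the pairs of compact elements, and the
  product and powers are computed componentwise. Hence an inequality \<open>x \<le> (q\<^sub>1, 1)\<close> only
  constrains first components, and the compact pairs \<open>(a, 0)\<close> realise every compact \<open>a\<close> of
  \<open>L\<^sub>1\<close>, so the absorbing condition for \<open>(q\<^sub>1, 1)\<close> in \<open>L\<close> is literally that for \<open>q\<^sub>1\<close> in \<open>L\<^sub>1\<close>.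
  The second part is the first one after swapping the factors.\<close>

lemma compact_el_bot: "compact_el bot"
  unfolding compact_el_def by (metis bot.extremum empty_subsetI finite.emptyI)

lemma compact_el_fst:
  assumes "compact_el (a, b)" shows "compact_el a"
  unfolding compact_el_def
proof (intro allI impI)
  fix S assume h: "a \<le> Sup S"
  show "\<exists>F. F \<subseteq> S \<and> finite F \<and> a \<le> Sup F"
  proof (cases "S = {}")
    case True then show ?thesis using h by auto
  next
    case False
    have "(a, b) \<le> Sup ((\<lambda>s. (s, top)) ` S)"
      using h False by (simp add: less_eq_prod_def fst_Sup snd_Sup image_image)
    then obtain F' where F': "F' \<subseteq> (\<lambda>s. (s, top)) ` S" "finite F'" "(a, b) \<le> Sup F'"
      using assms unfolding compact_el_def by blast
    have "a \<le> Sup (fst ` F')" using F'(3) by (simp add: less_eq_prod_def fst_Sup)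
    moreover have "fst ` F' \<subseteq> S" using F'(1) by auto
    ultimately show ?thesis using F'(2) by blast
  qed
qed

lemma compact_el_snd:
  assumes "compact_el (a, b)" shows "compact_el b"
  unfolding compact_el_def
proof (intro allI impI)
  fix S assume h: "b \<le> Sup S"
  show "\<exists>F. F \<subseteq> S \<and> finite F \<and> b \<le> Sup F"
  proof (cases "S = {}")
    case True then show ?thesis using h by auto
  next
    case False
    have "(a, b) \<le> Sup ((\<lambda>s. (top, s)) ` S)"
      using h False by (simp add: less_eq_prod_def fst_Sup snd_Sup image_image)
    then obtain F' where F': "F' \<subseteq> (\<lambda>s. (top, s)) ` S" "finite F'" "(a, b) \<le> Sup F'"
      using assms unfolding compact_el_def by blast
    have "b \<le> Sup (snd ` F')" using F'(3) by (simp add: less_eq_prod_def snd_Sup)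
    moreover have "snd ` F' \<subseteq> S" using F'(1) by auto
    ultimately show ?thesis using F'(2) by blast
  qed
qed

lemma compact_el_Pair:
  fixes a :: "'a::complete_lattice" and b :: "'b::complete_lattice"
  assumes ca: "compact_el a" and cb: "compact_el b"
  shows "compact_el (a, b)"
  unfolding compact_el_def
proof (intro allI impI)
  fix S :: "('a \<times> 'b) set"
  assume "(a, b) \<le> Sup S"
  then have "a \<le> Sup (fst ` S)" "b \<le> Sup (snd ` S)"
    by (simp_all add: less_eq_prod_def fst_Sup snd_Sup)
  then obtain F1 F2 where F1: "F1 \<subseteq> fst ` S" "finite F1" "a \<le> Sup F1"
      and F2: "F2 \<subseteq> snd ` S" "finite F2" "b \<le> Sup F2"
    using ca cb unfolding compact_el_def by meson
  obtain G1 where G1: "G1 \<subseteq> S" "finite G1" "F1 = fst ` G1"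
    using F1(1,2) finite_subset_image by meson
  obtain G2 where G2: "G2 \<subseteq> S" "finite G2" "F2 = snd ` G2"
    using F2(1,2) finite_subset_image by meson
  have "a \<le> Sup (fst ` (G1 \<union> G2))"
    using F1(3) unfolding G1(3)
    by (rule order_trans) (rule Sup_subset_mono, rule image_mono, rule Un_upper1)
  moreover have "b \<le> Sup (snd ` (G1 \<union> G2))"
    using F2(3) unfolding G2(3)
    by (rule order_trans) (rule Sup_subset_mono, rule image_mono, rule Un_upper2)
  ultimately have "(a, b) \<le> Sup (G1 \<union> G2)"
    by (simp add: less_eq_prod_def fst_Sup snd_Sup)
  with G1 G2 show "\<exists>F. F \<subseteq> S \<and> finite F \<and> (a, b) \<le> Sup F"
    by (intro exI[of _ "G1 \<union> G2"]) simp
qed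

lemma compact_el_Pair_iff: "compact_el (a, b) \<longleftrightarrow> compact_el a \<and> compact_el b"
  using compact_el_fst compact_el_snd compact_el_Pair by blast

lemma Pair_less_top_iff:
  "((a::'a::complete_lattice, b::'b::complete_lattice) < top) \<longleftrightarrow> a < top \<or> b < top"
  unfolding Pair_top_top[symmetric] by (auto simp: less_le_not_le less_eq_prod_def)

lemma mpow_prod_mult: "mpow (prod_mult m1 m2) (a, b) k = (mpow m1 a k, mpow m2 b k)"
  by (induction k) (auto simp: prod_mult_def Pair_top_top)

lemma quasi_n_absorbing_Pair_top:
  fixes m1 :: "'a::complete_lattice \<Rightarrow> 'a \<Rightarrow> 'a"
    and m2 :: "'b::complete_lattice \<Rightarrow> 'b \<Rightarrow> 'b"
  shows "quasi_n_absorbing (prod_mult m1 m2) n (q, top) \<longleftrightarrow> quasi_n_absorbing m1 n q"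
proof
  assume H: "quasi_n_absorbing m1 n q"
  show "quasi_n_absorbing (prod_mult m1 m2) n (q, top)"
    unfolding quasi_n_absorbing_def
  proof (intro conjI allI impI)
    have "q < top"
      using H by (simp add: quasi_n_absorbing_def)
    then show "(q, top::'b) < top"
      by (simp add: Pair_less_top_iff)
    fix a b :: "'a \<times> 'b"
    assume "compact_el a" "compact_el b"
      and le: "prod_mult m1 m2 (mpow (prod_mult m1 m2) a n) b \<le> (q, top)"
    then have "compact_el (fst a)" "compact_el (fst b)"
      by (metis compact_el_fst prod.collapse)+
    moreover have "m1 (mpow m1 (fst a) n) (fst b) \<le> q"
      using le by (cases a, cases b) (simp add: mpow_prod_mult prod_mult_def)
    ultimately have "mpow m1 (fst a) n \<le> q \<or> m1 (mpow m1 (fst a) (n - 1)) (fst b) \<le> q"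
      using H unfolding quasi_n_absorbing_def by blast
    then show "mpow (prod_mult m1 m2) a n \<le> (q, top) \<or>
        prod_mult m1 m2 (mpow (prod_mult m1 m2) a (n - 1)) b \<le> (q, top)"
      by (cases a, cases b) (simp add: mpow_prod_mult prod_mult_def)
  qed
next
  assume H: "quasi_n_absorbing (prod_mult m1 m2) n (q, top)"
  show "quasi_n_absorbing m1 n q"
    unfolding quasi_n_absorbing_def
  proof (intro conjI allI impI)
    have "(q, top::'b) < top"
      using H by (simp add: quasi_n_absorbing_def)
    then show "q < top"
      by (simp add: Pair_less_top_iff)
    fix a b :: 'a
    assume "compact_el a" "compact_el b" "m1 (mpow m1 a n) b \<le> q"
    then have "compact_el (a, bot::'b)" "compact_el (b, bot::'b)"
      and "prod_mult m1 m2 (mpow (prod_mult m1 m2) (a, bot::'b) n) (b, bot) \<le> (q, top)"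
      by (simp_all add: compact_el_Pair compact_el_bot mpow_prod_mult prod_mult_def)
    then have "mpow (prod_mult m1 m2) (a, bot::'b) n \<le> (q, top) \<or>
        prod_mult m1 m2 (mpow (prod_mult m1 m2) (a, bot::'b) (n - 1)) (b, bot) \<le> (q, top)"
      using H unfolding quasi_n_absorbing_def by blast
    then show "mpow m1 a n \<le> q \<or> m1 (mpow m1 a (n - 1)) b \<le> q"
      by (simp add: mpow_prod_mult prod_mult_def)
  qed
qed

lemma quasi_n_absorbing_prod_mult_swapI:
  fixes m1 :: "'a::complete_lattice \<Rightarrow> 'a \<Rightarrow> 'a"
    and m2 :: "'b::complete_lattice \<Rightarrow> 'b \<Rightarrow> 'b"
  assumes H: "quasi_n_absorbing (prod_mult m1 m2) n (q1, q2)"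
  shows "quasi_n_absorbing (prod_mult m2 m1) n (q2, q1)"
  unfolding quasi_n_absorbing_def
proof (intro conjI allI impI)
  have "(q1, q2) < top"
    using H by (simp add: quasi_n_absorbing_def)
  then show "(q2, q1) < top"
    by (auto simp: Pair_less_top_iff)
  fix a b :: "'b \<times> 'a"
  assume "compact_el a" "compact_el b"
    and le: "prod_mult m2 m1 (mpow (prod_mult m2 m1) a n) b \<le> (q2, q1)"
  then have "compact_el (prod.swap a)" "compact_el (prod.swap b)"
    by (cases a, cases b, simp add: compact_el_Pair_iff)+
  moreover have
    "prod_mult m1 m2 (mpow (prod_mult m1 m2) (prod.swap a) n) (prod.swap b) \<le> (q1, q2)"
    using le by (cases a, cases b) (simp add: mpow_prod_mult prod_mult_def)
  ultimately have "mpow (prod_mult m1 m2) (prod.swap a) n \<le> (q1, q2) \<or>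
      prod_mult m1 m2 (mpow (prod_mult m1 m2) (prod.swap a) (n - 1)) (prod.swap b) \<le> (q1, q2)"
    using H unfolding quasi_n_absorbing_def by blast
  then show "mpow (prod_mult m2 m1) a n \<le> (q2, q1) \<or>
      prod_mult m2 m1 (mpow (prod_mult m2 m1) a (n - 1)) b \<le> (q2, q1)"
    by (cases a, cases b) (auto simp: mpow_prod_mult prod_mult_def)
qed

lemma quasi_n_absorbing_prod_mult_swap:
  "quasi_n_absorbing (prod_mult m2 m1) n (q2, q1) \<longleftrightarrow>
    quasi_n_absorbing (prod_mult m1 m2) n (q1, q2)"
  by (rule iffI) (erule quasi_n_absorbing_prod_mult_swapI)+

theorem mainTheorem12:
  fixes m1 :: "'a::complete_lattice \<Rightarrow> 'a \<Rightarrow> 'a"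
    and m2 :: "'b::complete_lattice \<Rightarrow> 'b \<Rightarrow> 'b"
    and q1 :: 'a and q2 :: 'b and n :: nat
  assumes "C_lattice m1" and "C_lattice m2" and "n \<ge> 1"
  shows "(quasi_n_absorbing m1 n q1 \<longleftrightarrow> quasi_n_absorbing (prod_mult m1 m2) n (q1, top))
       \<and> (quasi_n_absorbing m2 n q2 \<longleftrightarrow> quasi_n_absorbing (prod_mult m1 m2) n (top, q2))"
proof -
  have "quasi_n_absorbing (prod_mult m1 m2) n (top, q2) \<longleftrightarrow>
      quasi_n_absorbing (prod_mult m2 m1) n (q2, top)"
    by (rule quasi_n_absorbing_prod_mult_swap)
  then show ?thesis
    by (simp add: quasi_n_absorbing_Pair_top)
qed

end
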